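(* Let $a\neq0$, $b>0$ and $d$ be integers with $d$ not a perfect square, $\alpha=a+b^2\sqrt d$, $N_\alpha=a^2-b^4d$, and suppose $N_\alpha$ is not a perfect square. Let $\varepsilon=(t+u\sqrt d)/2$ lie in the ring of integers of $\mathbb{Q}(\sqrt d)$, with $t,u$ nonzero integers, and let $N_\varepsilon=(t^2-du^2)/4$ be its norm. Suppose $x\neq0$ and $y>0$ are integers with $x+y^2\sqrt d=\alpha\varepsilon^2$. (a) There exist integers $f,r,s$ with $f\neq0$ such that \[ f^{2}\big(x+N_\varepsilon\sqrt{N_\alpha}\big)=\big(a+\sqrt{N_\alpha}\big)\big(r+s\sqrt{\operatorname{core}(N_\alpha)}\big)^{4},\qquad fy=b\big(r^2-\operatorname{core}(N_\alpha)s^2\big), \] and $f$ divides $4b^2\operatorname{rad}\!\big(f'\gcd(uN_\alpha/\operatorname{core}(N_\alpha),N_\varepsilon)\big)$ for some integer $f'$ with $f'\mid\operatorname{core}(N_\alpha)$ and $0<f'<\max\big(2,\sqrt{|\operatorname{core}(N_\alpha)|}\big)$. (b) If $-N_\alpha$ is a perfect square, then there exist integers $f,r,s$, $f\ne 0$, with $f\mid b^2\operatorname{rad}(\gcd(uN_\alpha,N_\varepsilon))$, $fy=b(r^2-\operatorname{core}(N_\alpha)s^2)$ and, for some choice of sign, $\pm f^{2}(x+N_\varepsilon\sqrt{N_\alpha})=(a+\sqrt{N_\alpha})(r+s\sqrt{\operatorname{core}(N_\alpha)})^{4}$. (c) If $\operatorname{core}(|N_\alpha|)=2^{\ell}p^{m}$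 with $\ell,m\in\{0,1\}$, $\ell+m\ge1$ and $p$ an odd prime, then the integers $f,r,s$ in (a) can be taken with $f\mid 4b^2\operatorname{rad}(\gcd(uN_\alpha/\operatorname{core}(N_\alpha),N_\varepsilon))$ when $N_\alpha\equiv1\pmod 4$ and $4\mid d$, and with $f\mid 2b^2\operatorname{rad}(\gcd(uN_\alpha/\operatorname{core}(N_\alpha),N_\varepsilon))$ otherwise.
   Context: For a nonzero integer $n$, $\operatorname{core}(n)$ is the unique squarefree integer with $n/\operatorname{core}(n)$ a perfect square ($\operatorname{core}(1)=1$); $\operatorname{rad}(n)$ is the product of the distinct primes dividing $n$, with $\operatorname{rad}(\pm1)=1$. For a negative integer $n$, $\sqrt n$ denotes $i\sqrt{|n|}$. *)

theory Defs
  imports Complex_Main "HOL-Computational_Algebra.Computational_Algebra"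
begin

definition core :: "int \<Rightarrow> int" where
  "core n = (THE c. squarefree c \<and> (\<exists>k::int. n = c * k^2))"

text \<open>Radical: product of the distinct (positive) primes dividing n; rad 0 = rad 1 = 1.\<close>
definition rad :: "int \<Rightarrow> int" where
  "rad n = (\<Prod>p\<in>prime_factors n. p)"

definition is_square :: "int \<Rightarrow> bool" where
  "is_square n \<longleftrightarrow> (\<exists>k::int. n = k^2)"

definition isqrt :: "int \<Rightarrow> complex" where
  "isqrt n = (if n \<ge> 0 then complex_of_real (sqrt (real_of_int n))
              else \<i> * complex_of_real (sqrt (real_of_int (- n))))"

definition alg_int :: "complex \<Rightarrow> bool" where
  "alg_int z \<longleftrightarrow> (\<exists>p :: complex poly. (\<forall>i. coeff p i \<in> \<int>) \<and> lead_coeff p = 1 \<and> poly p z = 0)"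

end

theory Submission
  imports Defs
begin

text \<open>
  Write \<open>N\<^sub>\<alpha> = c g\<^sup>2\<close> with \<open>c\<close> squarefree and \<open>w = \<surd>c\<close>, so that \<open>\<surd>N\<^sub>\<alpha> = g w\<close>.
  Comparing coefficients in \<open>x + y\<^sup>2\<surd>d = \<alpha>\<epsilon>\<^sup>2\<close> gives
  \<open>4b\<^sup>4 (x + N\<^sub>\<epsilon> g w) = (a + g w) (A - U w)\<^sup>2\<close> with \<open>A = t b\<^sup>2 + u a\<close>, \<open>U = u g\<close>, and
  \<open>A\<^sup>2 - c U\<^sup>2 = (2 b y)\<^sup>2\<close>. A coprime parametrization \<open>(r, s)\<close> of this conic gives
  \<open>\<kappa> (A - U w) = \<plusminus>\<delta> (r + s w)\<^sup>2\<close> with \<open>\<delta> = gcd(A, U)\<close> and \<open>\<kappa> = gcd(r\<^sup>2 + c s\<^sup>2, 2 r s)\<close>, hence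
  \<open>4 b\<^sup>4 \<kappa>\<^sup>2 (x + N\<^sub>\<epsilon> g w) = (a + g w) \<delta>\<^sup>2 (r + s w)\<^sup>4\<close>. Replacing \<open>r + s w\<close> by \<open>k (r + s w)\<close>,
  by \<open>k w (r + s w) / e\<close> with \<open>e = gcd(c, r)\<close>, or (when \<open>c = -1\<close>) by \<open>k (1 + w) (r + s w) / \<kappa>\<close>
  turns \<open>4 b\<^sup>4 \<kappa>\<^sup>2 / \<delta>\<^sup>2\<close> into \<open>f\<^sup>2\<close>, and \<open>k\<close> is chosen so that \<open>f\<close> is least in its square class.
  Comparing multiplicities prime by prime then bounds \<open>f\<close>: an odd prime dividing \<open>\<delta>\<close> but not
  \<open>b\<close> divides \<open>gcd(u g\<^sup>2, N\<^sub>\<epsilon>)\<close>, and the power of 2 is controlled by parity arguments.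
\<close>

section \<open>Square-free parts, radicals and square roots\<close>

lemma multiplicity_rad:
  fixes n p :: int
  assumes "n \<noteq> 0" and "prime p"
  shows "multiplicity p (rad n) = (if p dvd n then 1 else 0)"
proof -
  have "rad n = (\<Prod>q\<in>prime_factors n. q ^ (1::nat))"
    by (simp add: rad_def)
  also have "multiplicity p \<dots> = (if p \<in> prime_factors n then 1 else 0)"
    by (rule multiplicity_prod_prime_powers) (auto simp: assms)
  finally show ?thesis
    using assms by (auto simp: prime_factors_dvd)
qed

lemma rad_nonzero [simp]: "rad (n::int) \<noteq> 0"
  unfolding rad_def by (auto simp: prime_factors_dvd)

lemma multiplicity_squarefree_le_1:
  fixes c p :: int
  assumes "squarefree c" and "prime p"
  shows "multiplicity p c \<le> 1"
  using assms squarefree_factorial_semiring''[of c] by (cases "c = 0") auto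

lemma squarefree_times_square_unique:
  fixes c1 c2 k1 k2 :: int
  assumes "squarefree c1" and "squarefree c2"
    and eq: "c1 * k1^2 = c2 * k2^2" and nz: "c1 * k1^2 \<noteq> 0"
  shows "c1 = c2"
proof -
  have nz': "c1 \<noteq> 0" "c2 \<noteq> 0" "k1 \<noteq> 0" "k2 \<noteq> 0"
    using eq nz by auto
  have "normalize c1 = normalize c2"
  proof (rule multiplicity_eq_imp_eq[OF nz'(1,2)])
    fix p :: int
    assume p: "prime p"
    have "multiplicity p (c1 * k1^2) = multiplicity p (c2 * k2^2)"
      using eq by simp
    then have "multiplicity p c1 + 2 * multiplicity p k1 = multiplicity p c2 + 2 * multiplicity p k2"
      using prime_imp_prime_elem[OF p] nz'
      by (simp add: prime_elem_multiplicity_mult_distrib prime_elem_multiplicity_power_distrib)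
    moreover have "multiplicity p c1 \<le> 1" "multiplicity p c2 \<le> 1"
      using multiplicity_squarefree_le_1 assms(1,2) p by auto
    ultimately show "multiplicity p c1 = multiplicity p c2"
      by presburger
  qed
  moreover have "0 < c1 * k1^2 \<longleftrightarrow> 0 < c1" "0 < c2 * k2^2 \<longleftrightarrow> 0 < c2"
    using nz' by (simp_all add: zero_less_mult_iff)
  then have "0 < c1 \<longleftrightarrow> 0 < c2"
    using eq by simp
  ultimately show ?thesis
    by (auto simp: abs_if split: if_splits)
qed

lemma core_eqI:
  fixes c k n :: int
  assumes "squarefree c" and "n = c * k^2" and "n \<noteq> 0"
  shows "core n = c"
  unfolding core_def
proof (rule the_equality)
  fix c' assume "squarefree c' \<and> (\<exists>k. n = c' * k^2)"
  then obtain k' where "squarefree c'" and "n = c' * k'^2"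
    by blast
  then show "c' = c"
    using squarefree_times_square_unique[of c' c k' k] assms by auto
qed (use assms in auto)

lemma core_decompose:
  fixes n :: int
  assumes "n \<noteq> 0"
  obtains g where "g > 0" and "n = core n * g^2" and "squarefree (core n)"
proof -
  have "n = squarefree_part n * \<bar>square_part n\<bar>^2"
    using squarefree_decompose[of n] by simp
  then show ?thesis
    using that[of "\<bar>square_part n\<bar>"] core_eqI[of "squarefree_part n" n] assms by auto
qed

lemma core_abs:
  fixes n :: int
  assumes "n \<noteq> 0"
  shows "core \<bar>n\<bar> = \<bar>core n\<bar>"
proof -
  obtain g where n: "n = core n * g^2" and "squarefree (core n)"
    using core_decompose[OF assms] by blast
  have "\<bar>n\<bar> = \<bar>core n\<bar> * g^2"
    using arg_cong[OF n, of abs] by (simp add: abs_mult)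
  moreover have "squarefree \<bar>core n\<bar>"
    using \<open>squarefree (core n)\<close> by (simp add: abs_if)
  ultimately show ?thesis
    using assms by (intro core_eqI) auto
qed

lemma core_of_negated_square:
  fixes n :: int
  assumes "is_square (- n)" and "n \<noteq> 0"
  shows "core n = -1"
proof -
  obtain m where "n = -1 * m^2"
    using assms(1) unfolding is_square_def by (metis mult_minus1 minus_equation_iff)
  then show ?thesis
    using core_eqI[of "-1"] assms(2) by simp
qed

lemma isqrt_square [simp]: "isqrt n ^ 2 = of_int n"
  by (cases "n \<ge> 0") (simp_all add: isqrt_def power_mult_distrib flip: of_real_power)

lemma isqrt_mult_square:
  fixes c g :: int
  assumes "g > 0"
  shows "isqrt (c * g^2) = of_int g * isqrt c"
proof -
  have "sqrt (real_of_int (e * (c * g^2))) = real_of_int g * sqrt (real_of_int (e * c))" for e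
    using assms by (simp add: real_sqrt_mult)
  from this[of 1] this[of "-1"] have "sqrt (real_of_int (c * g^2)) = real_of_int g * sqrt (real_of_int c)"
    and "sqrt (real_of_int (- (c * g^2))) = real_of_int g * sqrt (real_of_int (- c))"
    by simp_all
  moreover have "c * g^2 \<ge> 0 \<longleftrightarrow> c \<ge> 0"
    using assms by (simp add: zero_le_mult_iff)
  ultimately show ?thesis
    by (simp add: isqrt_def)
qed

lemma isqrt_linear_independent:
  fixes d p q :: int
  assumes "\<not> is_square d" and "of_int p + of_int q * isqrt d = 0"
  shows "p = 0 \<and> q = 0"
proof (cases "q = 0")
  case True
  then show ?thesis using assms by simp
next
  case False
  show ?thesis
  proof (cases "d \<ge> 0")
    case True
    then have "real_of_int q * sqrt (real_of_int d) = - real_of_int p"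
      using assms(2) unfolding isqrt_def by (simp add: complex_eq_iff)
    then have "(real_of_int q * sqrt (real_of_int d))^2 = (real_of_int p)^2"
      by simp
    then have eq: "q^2 * d = p^2"
      using True by (simp add: power_mult_distrib flip: of_int_power of_int_mult)
    then have "q^2 dvd p^2"
      by (metis dvd_triv_left)
    then obtain m where "p = q * m"
      by (auto simp: pow_divides_pow_iff)
    with eq False have "d = m^2"
      by (simp add: power_mult_distrib)
    with assms(1) show ?thesis
      unfolding is_square_def by auto
  next
    case False
    then have "Im (of_int p + of_int q * isqrt d) = real_of_int q * sqrt (real_of_int (-d))"
      unfolding isqrt_def by simp
    with False \<open>q \<noteq> 0\<close> assms(2) show ?thesis
      by simp
  qed
qed

section \<open>Quadratic irrationalities and algebraic integers\<close>

lemma map_poly_of_int_add: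
  "map_poly (of_int :: int \<Rightarrow> 'a::comm_ring_1) (p + q) = map_poly of_int p + map_poly of_int q"
  by (rule poly_eqI) (simp add: coeff_map_poly)

lemma map_poly_of_int_mult:
  "map_poly (of_int :: int \<Rightarrow> 'a::comm_ring_1) (p * q) = map_poly of_int p * map_poly of_int q"
  by (rule poly_eqI) (simp add: coeff_map_poly coeff_mult)

lemma alg_int_iff_algebraic_int: "alg_int z \<longleftrightarrow> algebraic_int z"
  by (auto simp: alg_int_def algebraic_int.simps)

text \<open>By minimality of \<open>Q\<close>, pseudo-dividing a monic integer polynomial vanishing at \<open>z\<close> by \<open>Q\<close>
  leaves no remainder; comparing contents (Gauss's lemma) and leading coefficients concludes.\<close>
lemma algebraic_int_minimal_ipoly_lead_coeff_dvd_content: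
  fixes z :: "'a :: field_char_0" and Q :: "int poly"
  assumes "algebraic_int z" and "Q \<noteq> 0" and Qz: "poly (map_poly of_int Q) z = 0"
    and minimal: "\<And>R. degree R < degree Q \<Longrightarrow> poly (map_poly of_int R) z = 0 \<Longrightarrow> R = 0"
  shows "lead_coeff Q dvd content Q"
proof -
  obtain P where Pz: "poly (map_poly of_int P) z = 0" and P_monic: "lead_coeff P = 1"
    using assms(1) by (auto simp: algebraic_int_altdef_ipoly)
  obtain H R where div: "pseudo_divmod P Q = (H, R)"
    by (metis surj_pair)
  define l where "l = lead_coeff Q ^ (Suc (degree P) - degree Q)"
  have PQ: "smult l P = Q * H + R" and "R = 0 \<or> degree R < degree Q"
    using pseudo_divmod[OF \<open>Q \<noteq> 0\<close> div] by (simp_all add: l_def)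
  moreover have "poly (map_poly of_int R) z = 0"
    using arg_cong[OF PQ, of "\<lambda>p. poly (map_poly of_int p) z"] Pz Qz
    by (simp add: map_poly_of_int_add map_poly_of_int_mult map_poly_smult)
  ultimately have QH: "Q * H = smult l P"
    using minimal by auto
  have "l \<noteq> 0"
    using \<open>Q \<noteq> 0\<close> by (simp add: l_def)
  then have "lead_coeff H \<noteq> 0"
    using arg_cong[OF QH, of lead_coeff] P_monic by (auto simp: lead_coeff_mult)
  have "content P = 1"
    using content_dvd_coeff[of P "degree P"] P_monic normalize_content[of P] by simp
  then have "content Q * content H = \<bar>lead_coeff Q * lead_coeff H\<bar>"
    using arg_cong[OF QH, of content] arg_cong[OF QH, of lead_coeff] P_monic
    by (simp add: content_mult lead_coeff_mult)
  moreover have "content H dvd lead_coeff H"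
    by (rule content_dvd_coeff)
  then have "content Q * content H dvd content Q * lead_coeff H"
    by (rule mult_dvd_mono[OF dvd_refl])
  ultimately have "lead_coeff Q * lead_coeff H dvd content Q * lead_coeff H"
    by simp
  then show ?thesis
    using \<open>lead_coeff H \<noteq> 0\<close> by simp
qed

lemma algebraic_int_quadratic_norm:
  fixes d t u :: int
  assumes nonsquare: "\<not> is_square d" and "u \<noteq> 0"
    and "algebraic_int ((of_int t + of_int u * isqrt d) / 2)"
  shows "4 dvd t^2 - d * u^2"
proof -
  define z where "z = (of_int t + of_int u * isqrt d) / 2"
  define Q :: "int poly" where "Q = [:t^2 - d * u^2, -4 * t, 4:]"
  have "poly (map_poly of_int Q) z = 0"
    using isqrt_square[of d] by (simp add: Q_def z_def map_poly_pCons field_simps power2_eq_square)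
  moreover have "R = 0" if "degree R < degree Q" and Rz: "poly (map_poly of_int R) z = 0" for R
  proof -
    have "degree R < 2"
      using \<open>degree R < degree Q\<close> by (simp add: Q_def)
    then obtain r0 r1 where R: "R = [:r0, r1:]"
      by (metis One_nat_def degree0_coeffs degree1_coeffs less_2_cases_iff pCons_0_0)
    have "of_int (2 * r0 + r1 * t) + of_int (r1 * u) * isqrt d = 0"
      using Rz by (simp add: R z_def map_poly_pCons field_simps)
    then have "2 * r0 + r1 * t = 0 \<and> r1 * u = 0"
      by (rule isqrt_linear_independent[OF nonsquare])
    then show "R = 0"
      using \<open>u \<noteq> 0\<close> R by auto
  qed
  moreover have "Q \<noteq> 0"
    by (simp add: Q_def)
  ultimately have "lead_coeff Q dvd content Q"
    using algebraic_int_minimal_ipoly_lead_coeff_dvd_content assms(3) unfolding z_def by blast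
  also have "content Q dvd coeff Q 0"
    by (rule content_dvd_coeff)
  finally show ?thesis
    by (simp add: Q_def)
qed

lemma coefficients_of_alpha_eps_square:
  fixes a b d t u x y :: int
  assumes nonsquare: "\<not> is_square d"
    and eq: "of_int x + of_int (y^2) * isqrt d
      = (of_int a + of_int (b^2) * isqrt d) * ((of_int t + of_int u * isqrt d) / 2)^2"
  shows "4*x = a*(t^2 + d*u^2) + 2*b^2*d*t*u" and "4*y^2 = 2*t*u*a + b^2*(t^2 + d*u^2)"
proof -
  define w where "w = isqrt d"
  have "4 * (of_int x + of_int y^2 * w) = (of_int a + of_int b^2 * w) * (of_int t + of_int u * w)^2"
    using eq by (simp add: w_def power_divide field_simps)
  also have "\<dots> = of_int a * (of_int t^2 + w^2 * of_int u^2) + 2 * of_int b^2 * w^2 * of_int t * of_int u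
      + (2 * of_int t * of_int u * of_int a + of_int b^2 * (of_int t^2 + w^2 * of_int u^2)) * w"
    by algebra
  finally have "of_int (4*x - (a*(t^2 + d*u^2) + 2*b^2*d*t*u))
      + of_int (4*y^2 - (2*t*u*a + b^2*(t^2 + d*u^2))) * isqrt d = 0"
    by (simp add: w_def algebra_simps)
  from isqrt_linear_independent[OF nonsquare this]
  show "4*x = a*(t^2 + d*u^2) + 2*b^2*d*t*u" and "4*y^2 = 2*t*u*a + b^2*(t^2 + d*u^2)"
    by simp_all
qed

section \<open>Conics and binary quadratic forms\<close>

lemma coprime_parametrization_gcd:
  fixes A U c h r s :: int
  assumes "coprime r s" and "r \<noteq> 0" and "h > 0"
    and hA: "h * (r^2 + c*s^2) = 2*r*A" and hU: "U = - h*s"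
  shows "gcd (r^2 + c*s^2) (2*r*s) * A = sgn r * gcd A U * (r^2 + c*s^2)"
    and "gcd (r^2 + c*s^2) (2*r*s) * U = - sgn r * gcd A U * (2*r*s)"
proof -
  define \<kappa> where "\<kappa> = gcd (r^2 + c*s^2) (2*r*s)"
  have "h * \<kappa> = gcd (h * (r^2 + c*s^2)) (h * (2*r*s))"
    using gcd_mult_distrib_int[of h "r^2 + c*s^2" "2*r*s"] \<open>h > 0\<close> by (simp add: \<kappa>_def)
  also have "\<dots> = gcd ((2*r) * A) ((2*r) * (-U))"
    by (simp only: hA hU) (simp add: algebra_simps)
  also have "\<dots> = 2 * \<bar>r\<bar> * gcd A U"
    using gcd_mult_distrib_int[of "2*r" A "-U"] by (simp add: abs_mult)
  finally have h\<kappa>: "h * \<kappa> = 2 * (sgn r * r) * gcd A U"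
    by (simp add: abs_sgn)
  have "(2*r) * (\<kappa> * A) = \<kappa> * (h * (r^2 + c*s^2))"
    by (simp only: hA) (simp add: algebra_simps)
  also have "\<dots> = (h * \<kappa>) * (r^2 + c*s^2)"
    by (simp add: algebra_simps)
  also have "\<dots> = (2*r) * (sgn r * gcd A U * (r^2 + c*s^2))"
    unfolding h\<kappa> by (simp add: algebra_simps)
  finally show "\<kappa> * A = sgn r * gcd A U * (r^2 + c*s^2)"
    using \<open>r \<noteq> 0\<close> by simp
  have "\<kappa> * U = - (h * \<kappa>) * s"
    by (simp add: hU algebra_simps)
  also have "\<dots> = - sgn r * gcd A U * (2*r*s)"
    unfolding h\<kappa> by (simp add: algebra_simps)
  finally show "\<kappa> * U = - sgn r * gcd A U * (2*r*s)" .
qed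

text \<open>Rational parametrization of the conic \<open>A\<^sup>2 - c U\<^sup>2 = m\<^sup>2\<close> through the point
  \<open>(A, U) = (m, 0)\<close>: the integer \<open>A + m\<close> (or \<open>A - m\<close>) solves \<open>r\<^sub>0\<^sup>2 + c U\<^sup>2 = 2 r\<^sub>0 A\<close>,
  and \<open>(r, s)\<close> is \<open>(r\<^sub>0, -U)\<close> divided by its gcd.\<close>
lemma conic_coprime_parametrization:
  fixes A U c m :: int
  assumes conic: "A^2 - c*U^2 = m^2" and "m \<noteq> 0" and "U \<noteq> 0"
  obtains r s \<sigma> where "coprime r s" and "r \<noteq> 0" and "s \<noteq> 0" and "\<sigma> = 1 \<or> \<sigma> = -1"
    and "gcd (r^2 + c*s^2) (2*r*s) * A = \<sigma> * gcd A U * (r^2 + c*s^2)"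
    and "gcd (r^2 + c*s^2) (2*r*s) * U = - \<sigma> * gcd A U * (2*r*s)"
proof -
  define r0 where "r0 = (if A + m \<noteq> 0 then A + m else A - m)"
  have "r0 \<noteq> 0"
    using \<open>m \<noteq> 0\<close> by (auto simp: r0_def)
  have r0: "r0^2 + c*U^2 = 2*r0*A"
  proof -
    have "(r0 - A)^2 = m^2"
      by (simp add: r0_def)
    then show ?thesis
      using conic by (simp add: power2_eq_square algebra_simps)
  qed
  define h where "h = gcd r0 U"
  define r where "r = r0 div h"
  define s where "s = - (U div h)"
  have "h > 0"
    using \<open>r0 \<noteq> 0\<close> by (simp add: h_def)
  have r0_eq: "r0 = h * r" and U_eq: "U = - h * s"
    by (simp_all add: r_def s_def h_def)
  have "coprime r s"
    using div_gcd_coprime[of r0 U] \<open>r0 \<noteq> 0\<close> by (simp add: r_def s_def h_def)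
  have "r \<noteq> 0" "s \<noteq> 0"
    using \<open>r0 \<noteq> 0\<close> \<open>U \<noteq> 0\<close> r0_eq U_eq by auto
  have "h * (h * (r^2 + c*s^2)) = h * (2*r*A)"
    using r0 unfolding r0_eq U_eq by (simp add: algebra_simps power2_eq_square)
  then have "h * (r^2 + c*s^2) = 2*r*A"
    using \<open>h > 0\<close> by simp
  from coprime_parametrization_gcd[OF \<open>coprime r s\<close> \<open>r \<noteq> 0\<close> \<open>h > 0\<close> this U_eq]
  show ?thesis
    using that[of r s "sgn r"] \<open>coprime r s\<close> \<open>r \<noteq> 0\<close> \<open>s \<noteq> 0\<close> by (simp add: sgn_if)
qed

lemma gcd_binary_form_bounds:
  fixes r s c :: int
  assumes "coprime r s"
  shows "gcd c r dvd gcd (r^2 + c*s^2) (2*r*s)"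
    and "gcd (r^2 + c*s^2) (2*r*s) dvd 2 * gcd c r"
proof -
  define \<kappa> where "\<kappa> = gcd (r^2 + c*s^2) (2*r*s)"
  show "gcd c r dvd \<kappa>"
    by (simp add: \<kappa>_def power2_eq_square)
  have \<kappa>_form: "\<kappa> dvd r^2 + c*s^2" and \<kappa>_rs: "\<kappa> dvd 2*r*s"
    by (simp_all add: \<kappa>_def)
  have "coprime \<kappa> s"
  proof (rule coprimeI)
    fix q assume "q dvd \<kappa>" "q dvd s"
    then have "q dvd r^2"
      using \<kappa>_form by (metis dvd_add_left_iff dvd_mult dvd_trans power2_eq_square)
    with \<open>q dvd s\<close> \<open>coprime r s\<close> show "is_unit q"
      by (meson coprime_common_divisor coprime_power_left_iff)
  qed
  then have "\<kappa> dvd 2*r"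
    using \<kappa>_rs by (simp add: coprime_dvd_mult_left_iff)
  moreover have "\<kappa> dvd (2*c) * (s*s)"
  proof -
    have "\<kappa> dvd 2*(r^2 + c*s^2) - r*(2*r)"
      using dvd_diff[OF dvd_mult[OF \<kappa>_form, of 2] dvd_mult[OF \<open>\<kappa> dvd 2*r\<close>, of r]] .
    then show ?thesis
      by (simp add: algebra_simps power2_eq_square)
  qed
  then have "\<kappa> dvd 2*c"
    using \<open>coprime \<kappa> s\<close> by (simp add: coprime_dvd_mult_left_iff)
  ultimately have "\<kappa> dvd gcd (2*c) (2*r)"
    by simp
  also have "gcd (2*c) (2*r) = 2 * gcd c r"
    using gcd_mult_distrib_int[of 2 c r] by simp
  finally show "\<kappa> dvd 2 * gcd c r" .
qed

section \<open>Square classes and divisors\<close>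

text \<open>\<open>Z\<close> is, up to sign, the integer of least absolute value of the form \<open>X k\<^sup>2 / Y\<close>.\<close>
definition square_class_quotient :: "int \<Rightarrow> int \<Rightarrow> int \<Rightarrow> bool" where
  "square_class_quotient X Y Z \<longleftrightarrow> Z \<noteq> 0 \<and> (\<exists>k. X * k^2 = Y * Z) \<and>
     (\<forall>p. prime p \<longrightarrow> multiplicity p Z =
        (if multiplicity p Y \<le> multiplicity p X then multiplicity p X - multiplicity p Y
         else (multiplicity p Y - multiplicity p X) mod 2))"

lemma square_class_quotient_exists:
  fixes X Y :: int
  assumes "X \<noteq> 0" and "Y \<noteq> 0"
  shows "\<exists>Z. square_class_quotient X Y Z"
proof -
  define G where "G = gcd X Y"
  obtain X1 Y1 where X: "X = G * X1" and Y: "Y = G * Y1" and "coprime X1 Y1"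
  proof -
    have "G \<noteq> 0"
      using assms by (simp add: G_def)
    then show ?thesis
      using gcd_coprime_exists[of X Y] that unfolding G_def by (auto simp: mult.commute)
  qed
  have "X1 \<noteq> 0" "Y1 \<noteq> 0" "G \<noteq> 0"
    using assms X Y by auto
  define q where "q = squarefree_part Y1"
  define k where "k = square_part Y1"
  have Y1: "Y1 = q * k^2" and "q \<noteq> 0"
    unfolding q_def k_def by (rule squarefree_decompose) simp
  define Z where "Z = X1 * q"
  have "X * (q * k)^2 = G * (q * k^2) * (X1 * q)"
    by (simp only: X) (simp add: power2_eq_square algebra_simps)
  also have "\<dots> = Y * Z"
    by (simp only: Y Y1 Z_def)
  finally have "X * (q * k)^2 = Y * Z" .
  moreover have "multiplicity p Z =
      (if multiplicity p Y \<le> multiplicity p X then multiplicity p X - multiplicity p Y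
       else (multiplicity p Y - multiplicity p X) mod 2)" if "prime p" for p
  proof -
    have "\<not> (p dvd X1 \<and> p dvd Y1)"
      using coprime_common_divisor[OF \<open>coprime X1 Y1\<close>, of p] not_prime_unit[of p] \<open>prime p\<close> by blast
    then have "multiplicity p X1 = 0 \<or> multiplicity p Y1 = 0"
      by (auto simp: not_dvd_imp_multiplicity_0)
    moreover have "prime_elem p"
      using \<open>prime p\<close> by (rule prime_imp_prime_elem)
    then have "multiplicity p X = multiplicity p G + multiplicity p X1"
      and "multiplicity p Y = multiplicity p G + multiplicity p Y1"
      and "multiplicity p Z = multiplicity p X1 + multiplicity p Y1 mod 2"
      using \<open>X1 \<noteq> 0\<close> \<open>Y1 \<noteq> 0\<close> \<open>q \<noteq> 0\<close> \<open>G \<noteq> 0\<close>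
      by (simp_all add: X Y Z_def prime_elem_multiplicity_mult_distrib q_def
          prime_multiplicity_squarefree_part[OF \<open>prime p\<close>])
    ultimately show ?thesis
      by auto
  qed
  moreover have "Z \<noteq> 0"
    using \<open>X1 \<noteq> 0\<close> \<open>q \<noteq> 0\<close> by (simp add: Z_def)
  ultimately have "square_class_quotient X Y Z"
    unfolding square_class_quotient_def by blast
  then show ?thesis ..
qed

lemma square_class_quotient_multiplicity:
  assumes "square_class_quotient X Y Z" and "prime p"
  shows "multiplicity p Z =
    (if multiplicity p Y \<le> multiplicity p X then multiplicity p X - multiplicity p Y
     else (multiplicity p Y - multiplicity p X) mod 2)"
  using assms by (simp add: square_class_quotient_def)

lemma square_class_quotient_multiplicity_le:
  assumes "square_class_quotient X Y Z" and "prime p"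
  shows "multiplicity p Z \<le> multiplicity p X
    \<or> multiplicity p Z \<le> 1 \<and> p dvd Y \<and> multiplicity p X < multiplicity p Y"
proof (cases "multiplicity p Y \<le> multiplicity p X")
  case False
  then have "p dvd Y"
    using not_dvd_imp_multiplicity_0[of p Y] by auto
  then show ?thesis
    using False square_class_quotient_multiplicity[OF assms] by auto
qed (use square_class_quotient_multiplicity[OF assms] in auto)

lemma multiplicity_two_int:
  fixes p :: int
  assumes "prime p"
  shows "multiplicity p 2 = (if p = 2 then 1 else 0)"
proof (cases "p = 2")
  case False
  have "\<not> p dvd 2"
  proof
    assume "p dvd 2"
    then show False
      using assms False by (simp add: primes_dvd_imp_eq)
  qed
  then show ?thesis
    using False by (simp add: not_dvd_imp_multiplicity_0)
qed (simp add: prime_imp_prime_elem)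

lemma multiplicity_four_int:
  fixes p :: int
  assumes "prime p"
  shows "multiplicity p 4 = (if p = 2 then 2 else 0)"
proof -
  have "multiplicity p ((2::int)^2) = 2 * multiplicity p 2"
    using assms by (intro prime_elem_multiplicity_power_distrib) auto
  then show ?thesis
    using multiplicity_two_int[OF assms] by simp
qed

lemma even_of_four_dvd_sum_squares:
  fixes A U :: int
  assumes "4 dvd A^2 + U^2"
  shows "even A" and "even U"
proof -
  have "even A \<and> even U"
  proof (rule ccontr)
    assume "\<not> (even A \<and> even U)"
    moreover have "even (A^2 + U^2)"
      by (rule dvd_trans[OF _ assms]) simp
    ultimately obtain A' U' where "A = 2*A' + 1" and "U = 2*U' + 1"
      by (auto elim!: oddE)
    then have "A^2 + U^2 = 4*(A'^2 + A' + U'^2 + U') + 2"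
      by (simp add: power2_eq_square algebra_simps)
    with assms show False
      by presburger
  qed
  then show "even A" and "even U"
    by simp_all
qed

lemma squarefree_divisor_or_cofactor_small:
  fixes c e :: int
  assumes "squarefree c" and "e dvd c" and "e > 0"
  shows "real_of_int e < max 2 (sqrt \<bar>real_of_int c\<bar>)
    \<or> real_of_int \<bar>c div e\<bar> < max 2 (sqrt \<bar>real_of_int c\<bar>)"
proof -
  define e' where "e' = \<bar>c div e\<bar>"
  have c_eq: "\<bar>c\<bar> = e * e'"
    using assms(2,3) by (auto simp: e'_def abs_mult elim!: dvdE)
  have "e' > 0"
    using c_eq \<open>e > 0\<close> \<open>squarefree c\<close> by (auto simp: e'_def zero_less_mult_iff)
  have lt_sqrt: "real_of_int n < sqrt \<bar>real_of_int c\<bar>" if "n^2 < \<bar>c\<bar>" for n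
    using that by (intro real_less_rsqrt) (simp flip: of_int_abs of_int_power)
  show ?thesis
  proof (cases "e \<le> e'")
    case True
    then have "e^2 \<le> \<bar>c\<bar>"
      using c_eq \<open>e > 0\<close> by (simp add: power2_eq_square)
    moreover have "e^2 \<noteq> \<bar>c\<bar> \<or> e = 1"
      using \<open>squarefree c\<close> \<open>e > 0\<close> squarefreeD[of c e] by auto
    ultimately show ?thesis
      using lt_sqrt[of e] by auto
  next
    case False
    then have "e'^2 < \<bar>c\<bar>"
      using c_eq \<open>e' > 0\<close> by (simp add: power2_eq_square)
    then show ?thesis
      using lt_sqrt[of e'] by (auto simp: e'_def)
  qed
qed

lemma divisor_or_cofactor_dvd_2:
  fixes c e p :: int and l m :: nat
  assumes c: "\<bar>c\<bar> = 2^l * p^m" and "l \<le> 1" and "m \<le> 1" and "prime p"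
    and "e dvd c" and "e > 0"
  shows "e dvd 2 \<or> c div e dvd 2"
proof -
  have two_l: "(2::int)^l dvd 2"
    using \<open>l \<le> 1\<close> by (cases l) auto
  obtain q where q: "c = e * q"
    using \<open>e dvd c\<close> by blast
  then have eq: "e * \<bar>q\<bar> = 2^l * p^m"
    using c \<open>e > 0\<close> by (simp add: abs_mult)
  show ?thesis
  proof (cases "p dvd e \<and> m = 1")
    case True
    then obtain e' where "e = p * e'"
      by blast
    with eq True \<open>prime p\<close> have "e' * \<bar>q\<bar> = 2^l"
      by (auto simp: algebra_simps)
    then have "\<bar>q\<bar> dvd 2^l"
      by (metis dvd_triv_right)
    then show ?thesis
      using two_l q \<open>e > 0\<close> by (auto intro: dvd_trans)
  next
    case False
    have "coprime e (p^m)"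
    proof (cases "m = 0")
      case False
      then have "\<not> p dvd e"
        using \<open>m \<le> 1\<close> \<open>\<not> (p dvd e \<and> m = 1)\<close> by simp
      then show ?thesis
        using prime_imp_coprime[OF \<open>prime p\<close>] by (simp add: coprime_commute)
    qed simp
    moreover have "e dvd 2^l * p^m"
      using eq by (metis dvd_triv_left)
    ultimately have "e dvd 2^l"
      by (simp add: coprime_dvd_mult_left_iff)
    then show ?thesis
      using two_l dvd_trans by blast
  qed
qed

text \<open>The integer data of \<open>x + y\<^sup>2\<surd>d = \<alpha> \<epsilon>\<^sup>2\<close>: \<open>N\<^sub>\<alpha> = c g\<^sup>2\<close> with \<open>c\<close> squarefree, \<open>N\<epsilon>\<close> is the
  norm of \<open>\<epsilon>\<close>, and \<open>w\<close> is a square root of \<open>c\<close>, so that \<open>g w\<close> is a square root of \<open>N\<^sub>\<alpha>\<close>.\<close>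
locale alpha_eps_square =
  fixes a b d t u x y N\<epsilon> c g :: int and w :: complex
  assumes b_pos: "b > 0" and y_pos: "y > 0" and u_nonzero: "u \<noteq> 0" and g_pos: "g > 0"
    and squarefree_c: "squarefree c" and w_square: "w^2 = of_int c"
    and x_eq: "4*x = a*(t^2 + d*u^2) + 2*b^2*d*t*u"
    and y_eq: "4*y^2 = 2*t*u*a + b^2*(t^2 + d*u^2)"
    and norm_eps: "t^2 - d*u^2 = 4*N\<epsilon>"
    and norm_alpha: "a^2 - b^4*d = c*g^2"
begin

definition A where "A = t*b^2 + u*a"
definition U where "U = u*g"
definition \<delta> where "\<delta> = gcd A U"
definition G where "G = gcd (u*g^2) N\<epsilon>"

definition quartic_representation :: "int \<Rightarrow> int \<Rightarrow> int \<Rightarrow> int \<Rightarrow> bool" where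
  "quartic_representation \<tau> f r s \<longleftrightarrow> f * y = b * (r^2 - c*s^2) \<and>
     of_int (\<tau> * f^2) * (of_int x + of_int N\<epsilon> * (of_int g * w))
       = (of_int a + of_int g * w) * (of_int r + of_int s * w)^4"

lemma c_nonzero: "c \<noteq> 0"
  using squarefree_c by auto

lemma U_nonzero: "U \<noteq> 0"
  using u_nonzero g_pos by (simp add: U_def)

lemma delta_pos: "\<delta> > 0"
  using U_nonzero by (simp add: \<delta>_def)

lemma G_nonzero: "G \<noteq> 0"
  using u_nonzero g_pos by (simp add: G_def)

lemma conic_A_U: "A^2 - c*U^2 = (2*b*y)^2"
proof -
  have "A^2 - c*U^2 = A^2 - u^2*(a^2 - b^4*d)"
    by (simp add: U_def norm_alpha power_mult_distrib)
  also have "\<dots> = b^2*(2*t*u*a + b^2*(t^2 + d*u^2))"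
    unfolding A_def by algebra
  finally show ?thesis
    by (simp add: y_eq [symmetric] power_mult_distrib)
qed

lemma four_b4_factorization:
  "4 * of_int b^4 * (of_int x + of_int N\<epsilon> * (of_int g * w))
    = (of_int a + of_int g * w) * (of_int A - of_int U * w)^2"
proof -
  have x: "4*b^4*x = a*(A^2 + c*U^2) - 2*A*(c*g*U)"
  proof -
    have "4*b^4*x = b^4*(a*(t^2 + d*u^2) + 2*b^2*d*t*u)"
      by (simp add: x_eq [symmetric])
    also have "\<dots> = a*(A^2 + u^2*(a^2 - b^4*d)) - 2*A*(u*(a^2 - b^4*d))"
      unfolding A_def by algebra
    also have "\<dots> = a*(A^2 + c*U^2) - 2*A*(c*g*U)"
      unfolding norm_alpha U_def by (simp add: power2_eq_square algebra_simps)
    finally show ?thesis .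
  qed
  have N: "4*b^4*N\<epsilon>*g = g*(A^2 + c*U^2) - 2*a*A*U"
  proof -
    have "4*b^4*N\<epsilon>*g = g*(b^4*(t^2 - d*u^2))"
      by (simp add: norm_eps algebra_simps)
    also have "\<dots> = g*(A^2 + u^2*(a^2 - b^4*d)) - 2*a*A*(u*g)"
      unfolding A_def by algebra
    also have "\<dots> = g*(A^2 + c*U^2) - 2*a*A*U"
      unfolding norm_alpha U_def by (simp add: power2_eq_square algebra_simps)
    finally show ?thesis .
  qed
  have "(of_int a + of_int g * w) * (of_int A - of_int U * w)^2
      = of_int a * (of_int A^2 + of_int U^2 * w^2) - 2 * of_int g * of_int A * of_int U * w^2
        + (of_int g * (of_int A^2 + of_int U^2 * w^2) - 2 * of_int a * of_int A * of_int U) * w"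
    by algebra
  also have "\<dots> = of_int (4*b^4*x) + of_int (4*b^4*N\<epsilon>*g) * w"
    unfolding x N w_square by (simp add: algebra_simps)
  finally show ?thesis
    by (simp add: algebra_simps)
qed

lemma odd_prime_dvd_delta:
  assumes "prime p" and "p \<noteq> 2" and "p dvd \<delta>" and "\<not> p dvd b"
  shows "p dvd G"
proof -
  have "p dvd A" and "p dvd u*g"
    using \<open>p dvd \<delta>\<close> by (auto simp: \<delta>_def U_def)
  then have ug: "p dvd u*g^2"
    by (metis dvd_mult2 mult.assoc power2_eq_square)
  have "4*b^4*N\<epsilon> = u^2*(c*g^2) - (u*a - t*b^2)*A"
  proof -
    have "4*b^4*N\<epsilon> = b^4*(t^2 - d*u^2)"
      by (simp add: norm_eps)
    also have "\<dots> = u^2*(a^2 - b^4*d) - (u*a - t*b^2)*A"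
      unfolding A_def by algebra
    finally show ?thesis
      by (simp add: norm_alpha)
  qed
  moreover have "p dvd (u*g^2) * (u*c)"
    using ug by (rule dvd_mult2)
  then have "p dvd u^2*(c*g^2)"
    by (simp add: power2_eq_square algebra_simps)
  ultimately have "p dvd 4*b^4*N\<epsilon>"
    using \<open>p dvd A\<close> by simp
  moreover have "\<not> p dvd 2^2"
  proof
    assume "p dvd 2^2"
    then have "p dvd 2"
      using \<open>prime p\<close> prime_dvd_power by blast
    then show False
      using \<open>prime p\<close> \<open>p \<noteq> 2\<close> by (simp add: primes_dvd_imp_eq)
  qed
  ultimately have "p dvd N\<epsilon>"
    using \<open>prime p\<close> \<open>\<not> p dvd b\<close> by (simp add: prime_dvd_mult_iff prime_dvd_power_iff)
  then show ?thesis
    using ug by (simp add: G_def)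
qed

lemma even_d_of_odd_u:
  assumes "odd u" and "odd (a^2 - b^4*d)"
  shows "even d"
proof (rule ccontr)
  assume "odd d"
  have "t^2 = d*u^2 + 4*N\<epsilon>"
    using norm_eps by simp
  then have "odd (t^2)"
    using \<open>odd d\<close> \<open>odd u\<close> by simp
  then have "odd t"
    by simp
  have "2 * (y^2 + b^2*N\<epsilon>) = t * (u*a + b^2*t)"
    using y_eq norm_eps by (simp add: power2_eq_square algebra_simps)
  then have "even (t * (u*a + b^2*t))"
    by (metis dvd_triv_left)
  then have "even (u*a + b^2*t)"
    using \<open>odd t\<close> by simp
  then have "even a \<longleftrightarrow> even b"
    using \<open>odd u\<close> \<open>odd t\<close> by simp
  then show False
    using \<open>odd (a^2 - b^4*d)\<close> \<open>odd d\<close> by simp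
qed

lemma two_adic_norm_of_odd_U:
  assumes "odd U" and "odd c"
  shows "(a^2 - b^4*d) mod 4 = 1" and "4 dvd d"
proof -
  have "odd u" and "odd g"
    using \<open>odd U\<close> by (simp_all add: U_def)
  have "odd (a^2 - b^4*d)"
    using norm_alpha \<open>odd c\<close> \<open>odd g\<close> by simp
  have t2: "t^2 = d*u^2 + 4*N\<epsilon>"
    using norm_eps by simp
  have "even d"
    using even_d_of_odd_u \<open>odd u\<close> \<open>odd (a^2 - b^4*d)\<close> by blast
  then have "even (t^2)"
    using t2 by simp
  then have "even t"
    by simp
  then obtain t1 where "t = 2 * t1"
    by blast
  then have "d * u^2 = 4 * (t1^2 - N\<epsilon>)"
    using t2 by algebra
  then have "4 dvd d * u^2"
    by simp
  moreover have "coprime 4 (u^2)"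
  proof -
    have "coprime 2 (u^2)"
      using \<open>odd u\<close> by (simp add: coprime_left_2_iff_odd)
    then show ?thesis
      using coprime_mult_left_iff[of 2 2 "u^2"] by simp
  qed
  ultimately show "4 dvd d"
    by (simp add: coprime_dvd_mult_left_iff)
  have "odd a"
    using \<open>odd (a^2 - b^4*d)\<close> \<open>even d\<close> by simp
  then obtain a1 where "a = 2*a1 + 1"
    by (blast elim: oddE)
  moreover obtain d1 where "d = 4*d1"
    using \<open>4 dvd d\<close> by blast
  ultimately have "a^2 - b^4*d = 4*(a1^2 + a1 - b^4*d1) + 1"
    by (simp add: power2_eq_square algebra_simps)
  then show "(a^2 - b^4*d) mod 4 = 1"
    by presburger
qed

lemma quotient_odd_multiplicity_le:
  assumes "square_class_quotient (2 * b^2 * X) \<delta> Z" and "X \<noteq> 0" and "prime p" and "p \<noteq> 2"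
  shows "multiplicity p Z \<le> max (multiplicity p (b^2 * X)) (if p dvd G then 1 else 0)"
proof -
  have "multiplicity p (2 * b^2 * X) = multiplicity p (b^2 * X)"
    using assms b_pos prime_imp_prime_elem[OF assms(3)]
    by (simp add: prime_elem_multiplicity_mult_distrib multiplicity_two_int mult.assoc)
  then consider "multiplicity p Z \<le> multiplicity p (b^2 * X)" | "multiplicity p Z \<le> 1" "p dvd \<delta>"
    using square_class_quotient_multiplicity_le[OF assms(1,3)] by auto
  then show ?thesis
  proof cases
    case 2
    show ?thesis
    proof (cases "p dvd b")
      case True
      then have "multiplicity p b \<ge> 1"
        using b_pos prime_imp_prime_elem[OF \<open>prime p\<close>]
        by (simp add: prime_multiplicity_gt_zero_iff Suc_le_eq)
      then have "multiplicity p (b^2 * X) \<ge> 1"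
        using assms b_pos prime_imp_prime_elem[OF assms(3)]
        by (simp add: prime_elem_multiplicity_mult_distrib prime_elem_multiplicity_power_distrib)
      then show ?thesis
        using 2 by simp
    next
      case False
      then show ?thesis
        using 2 odd_prime_dvd_delta assms(3,4) by auto
    qed
  qed auto
qed

lemma quotient_dvd_squarefree:
  assumes quot: "square_class_quotient (2 * b^2 * (\<phi> * j)) \<delta> Z"
    and "squarefree \<phi>" and "j dvd 2"
  shows "Z dvd 4 * b^2 * rad (\<bar>\<phi>\<bar> * G)"
proof (rule multiplicity_le_imp_dvd)
  show "Z \<noteq> 0"
    using quot by (simp add: square_class_quotient_def)
  fix p :: int
  assume "prime p"
  then have "prime_elem p"
    by (rule prime_imp_prime_elem)
  have nonzero: "\<phi> \<noteq> 0" "j \<noteq> 0" "b \<noteq> 0"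
    using \<open>squarefree \<phi>\<close> \<open>j dvd 2\<close> b_pos by auto
  define \<chi> :: nat where "\<chi> = (if p dvd \<bar>\<phi>\<bar> * G then 1 else 0)"
  have target: "multiplicity p (4 * b^2 * rad (\<bar>\<phi>\<bar> * G)) = multiplicity p 4 + 2 * multiplicity p b + \<chi>"
    using \<open>prime_elem p\<close> \<open>prime p\<close> nonzero G_nonzero
    by (simp add: \<chi>_def prime_elem_multiplicity_mult_distrib prime_elem_multiplicity_power_distrib
        multiplicity_rad)
  have X: "multiplicity p (2 * b^2 * (\<phi> * j))
      = multiplicity p 2 + 2 * multiplicity p b + multiplicity p \<phi> + multiplicity p j"
    using \<open>prime_elem p\<close> nonzero
    by (simp add: prime_elem_multiplicity_mult_distrib prime_elem_multiplicity_power_distrib)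
  have "multiplicity p \<phi> \<le> \<chi>"
    using multiplicity_squarefree_le_1[OF \<open>squarefree \<phi>\<close> \<open>prime p\<close>]
      not_dvd_imp_multiplicity_0[of p \<phi>] by (cases "p dvd \<phi>") (auto simp: \<chi>_def)
  moreover have "multiplicity p j \<le> multiplicity p 2"
    using dvd_imp_multiplicity_le[OF \<open>j dvd 2\<close>] by simp
  moreover have "multiplicity p Z \<le> multiplicity p (2 * b^2 * (\<phi> * j)) \<or> multiplicity p Z \<le> 1"
    using square_class_quotient_multiplicity_le[OF quot \<open>prime p\<close>] by auto
  moreover have "p \<noteq> 2 \<Longrightarrow>
      multiplicity p Z \<le> max (multiplicity p (b^2 * (\<phi> * j))) (if p dvd G then 1 else 0)"
    using quotient_odd_multiplicity_le[OF quot] nonzero \<open>prime p\<close> by simp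
  moreover have "p dvd G \<Longrightarrow> \<chi> = 1"
    by (simp add: \<chi>_def)
  ultimately show "multiplicity p Z \<le> multiplicity p (4 * b^2 * rad (\<bar>\<phi>\<bar> * G))"
    unfolding target using \<open>prime_elem p\<close> nonzero X \<open>prime p\<close>
    by (auto simp: multiplicity_two_int multiplicity_four_int prime_elem_multiplicity_mult_distrib
        prime_elem_multiplicity_power_distrib split: if_splits)
qed

lemma quotient_dvd_of_two_adic_bound:
  assumes quot: "square_class_quotient (2 * b^2 * X) \<delta> Z"
    and "X dvd 4" and "K \<noteq> 0"
    and two_adic: "multiplicity 2 Z \<le> multiplicity 2 K + 2 * multiplicity 2 b"
  shows "Z dvd K * b^2 * rad G"
proof (rule multiplicity_le_imp_dvd)
  show "Z \<noteq> 0"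
    using quot by (simp add: square_class_quotient_def)
  fix p :: int
  assume "prime p"
  then have "prime_elem p"
    by (rule prime_imp_prime_elem)
  have nonzero: "X \<noteq> 0" "b \<noteq> 0"
    using \<open>X dvd 4\<close> b_pos by auto
  have target: "multiplicity p (K * b^2 * rad G)
      = multiplicity p K + 2 * multiplicity p b + (if p dvd G then 1 else 0)"
    using \<open>prime_elem p\<close> \<open>prime p\<close> nonzero G_nonzero \<open>K \<noteq> 0\<close>
    by (simp add: prime_elem_multiplicity_mult_distrib prime_elem_multiplicity_power_distrib
        multiplicity_rad)
  show "multiplicity p Z \<le> multiplicity p (K * b^2 * rad G)"
  proof (cases "p = 2")
    case True
    then show ?thesis
      using two_adic target by simp
  next
    case False
    have "multiplicity p X \<le> multiplicity p 4"
      using dvd_imp_multiplicity_le[OF \<open>X dvd 4\<close>] by simp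
    then have "multiplicity p X = 0"
      using False multiplicity_four_int[OF \<open>prime p\<close>] by simp
    then have "multiplicity p (b^2 * X) = 2 * multiplicity p b"
      using \<open>prime_elem p\<close> nonzero
      by (simp add: prime_elem_multiplicity_mult_distrib prime_elem_multiplicity_power_distrib)
    then show ?thesis
      using quotient_odd_multiplicity_le[OF quot nonzero(1) \<open>prime p\<close> False] target by auto
  qed
qed

lemma square_class_quotient_by_delta:
  assumes "X \<noteq> 0"
  obtains Z k where "square_class_quotient (2 * b^2 * X) \<delta> Z" and "2 * b^2 * X * k^2 = \<delta> * Z"
  using square_class_quotient_exists[of "2 * b^2 * X" \<delta>] assms b_pos delta_pos
  unfolding square_class_quotient_def by auto

end

section \<open>Representations from a parametrization of the conic\<close>

locale alpha_eps_param = alpha_eps_square +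
  fixes r s \<sigma> :: int
  assumes coprime_r_s: "coprime r s" and r_nonzero: "r \<noteq> 0" and s_nonzero: "s \<noteq> 0"
    and sigma: "\<sigma> = 1 \<or> \<sigma> = -1"
    and param_A: "gcd (r^2 + c*s^2) (2*r*s) * A = \<sigma> * \<delta> * (r^2 + c*s^2)"
    and param_U: "gcd (r^2 + c*s^2) (2*r*s) * U = - \<sigma> * \<delta> * (2*r*s)"

lemma (in alpha_eps_square) parametrization_exists:
  "\<exists>r s \<sigma>. alpha_eps_param a b d t u x y N\<epsilon> c g w r s \<sigma>"
proof -
  have "2*b*y \<noteq> 0"
    using b_pos y_pos by simp
  from conic_coprime_parametrization[OF conic_A_U this U_nonzero] obtain r s \<sigma> where
    "coprime r s" "r \<noteq> 0" "s \<noteq> 0" "\<sigma> = 1 \<or> \<sigma> = -1"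
    "gcd (r^2 + c*s^2) (2*r*s) * A = \<sigma> * \<delta> * (r^2 + c*s^2)"
    "gcd (r^2 + c*s^2) (2*r*s) * U = - \<sigma> * \<delta> * (2*r*s)"
    unfolding \<delta>_def by metis
  then have "alpha_eps_param a b d t u x y N\<epsilon> c g w r s \<sigma>"
    by unfold_locales
  then show ?thesis
    by blast
qed

context alpha_eps_param
begin

definition \<kappa> where "\<kappa> = gcd (r^2 + c*s^2) (2*r*s)"
definition e where "e = gcd c r"
definition \<kappa>' where "\<kappa>' = \<kappa> div e"

lemma kappa_pos: "\<kappa> > 0"
  using r_nonzero s_nonzero by (simp add: \<kappa>_def)

lemma e_pos: "e > 0"
  using c_nonzero by (simp add: e_def)

lemma e_dvd_c: "e dvd c" and e_dvd_r: "e dvd r"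
  by (simp_all add: e_def)

lemma kappa_eq: "\<kappa> = e * \<kappa>'"
  using gcd_binary_form_bounds(1)[OF coprime_r_s, of c] by (simp add: \<kappa>'_def \<kappa>_def e_def)

lemma kappa_dvd_2e: "\<kappa> dvd 2 * e"
  using gcd_binary_form_bounds(2)[OF coprime_r_s, of c] by (simp add: \<kappa>_def e_def)

lemma kappa'_dvd_2: "\<kappa>' dvd 2"
  using kappa_dvd_2e e_pos by (simp add: kappa_eq mult.commute[of 2])

lemma kappa'_pos: "\<kappa>' > 0"
  using kappa_pos e_pos kappa_eq by (simp add: zero_less_mult_iff)

lemma kappa_A: "\<kappa> * A = \<sigma> * \<delta> * (r^2 + c*s^2)"
  using param_A by (simp only: \<kappa>_def)

lemma kappa_U: "\<kappa> * U = - \<sigma> * \<delta> * (2*r*s)"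
  using param_U by (simp only: \<kappa>_def)

lemma kappa_times_conjugate:
  "of_int \<kappa> * (of_int A - of_int U * w) = of_int \<sigma> * of_int \<delta> * (of_int r + of_int s * w)^2"
proof -
  have "of_int \<kappa> * (of_int A - of_int U * w)
      = of_int (\<kappa> * A) - of_int (\<kappa> * U) * w"
    by (simp add: algebra_simps)
  also have "\<dots> = of_int \<sigma> * of_int \<delta> * (of_int r^2 + w^2 * of_int s^2 + 2 * of_int r * of_int s * w)"
    unfolding w_square using kappa_A kappa_U by (simp add: algebra_simps)
  also have "\<dots> = of_int \<sigma> * of_int \<delta> * (of_int r + of_int s * w)^2"
    by algebra
  finally show ?thesis .
qed

lemma fourth_power_identity:
  "4 * of_int b^4 * of_int \<kappa>^2 * (of_int x + of_int N\<epsilon> * (of_int g * w))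
    = (of_int a + of_int g * w) * of_int \<delta>^2 * (of_int r + of_int s * w)^4"
proof -
  have "(of_int \<sigma> :: complex)^2 = 1"
    using sigma by auto
  then have square: "of_int \<kappa>^2 * (of_int A - of_int U * w)^2 = of_int \<delta>^2 * (of_int r + of_int s * w)^4"
    using arg_cong[OF kappa_times_conjugate, of "\<lambda>z. z^2"] by (simp add: power_mult_distrib)
  have "4 * of_int b^4 * of_int \<kappa>^2 * (of_int x + of_int N\<epsilon> * (of_int g * w))
      = of_int \<kappa>^2 * (4 * of_int b^4 * (of_int x + of_int N\<epsilon> * (of_int g * w)))"
    by (simp only: ac_simps)
  also have "\<dots> = (of_int a + of_int g * w) * (of_int \<kappa>^2 * (of_int A - of_int U * w)^2)"
    unfolding four_b4_factorization by (simp only: ac_simps)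
  also have "\<dots> = (of_int a + of_int g * w) * of_int \<delta>^2 * (of_int r + of_int s * w)^4"
    unfolding square by (simp only: ac_simps)
  finally show ?thesis .
qed

lemma norm_identity: "(\<delta> * (r^2 - c*s^2))^2 = (2 * \<kappa> * b * y)^2"
proof -
  have "(2 * \<kappa> * b * y)^2 = (\<kappa> * A)^2 - c * (\<kappa> * U)^2"
    using conic_A_U by (simp add: power_mult_distrib algebra_simps)
  also have "\<dots> = \<sigma>^2 * (\<delta> * (r^2 - c*s^2))^2"
    unfolding kappa_A kappa_U by algebra
  finally show ?thesis
    using sigma by auto
qed

lemma rescaled_representation:
  fixes r' s' m n Z \<tau> :: int
  assumes "m \<noteq> 0" and "\<tau> = 1 \<or> \<tau> = -1"
    and quartic: "of_int (m^2) * (of_int r' + of_int s' * w)^4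
      = of_int (\<tau> * n^2) * (of_int r + of_int s * w)^4"
    and norm: "(m * (r'^2 - c*s'^2))^2 = (n * (r^2 - c*s^2))^2"
    and scale: "(Z * \<delta> * m)^2 = (2 * b^2 * \<kappa> * n)^2"
  shows "quartic_representation \<tau> Z r' s' \<or> quartic_representation \<tau> (-Z) r' s'"
proof -
  have "(Z * y)^2 * (\<delta> * m)^2 = (b * (r'^2 - c*s'^2))^2 * (\<delta> * m)^2"
  proof -
    have "(Z * y)^2 * (\<delta> * m)^2 = (Z * \<delta> * m)^2 * y^2"
      by algebra
    also have "\<dots> = b^2 * n^2 * (2 * \<kappa> * b * y)^2"
      unfolding scale by algebra
    also have "\<dots> = b^2 * (n * (r^2 - c*s^2))^2 * \<delta>^2"
      unfolding norm_identity [symmetric] by algebra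
    also have "\<dots> = (b * (r'^2 - c*s'^2))^2 * (\<delta> * m)^2"
      unfolding norm [symmetric] by algebra
    finally show ?thesis .
  qed
  then have "(Z * y)^2 = (b * (r'^2 - c*s'^2))^2"
    using delta_pos \<open>m \<noteq> 0\<close> by simp
  then have norm_eq: "Z * y = b * (r'^2 - c*s'^2) \<or> (-Z) * y = b * (r'^2 - c*s'^2)"
    by (auto simp: power2_eq_iff)
  define X :: complex where "X = of_int x + of_int N\<epsilon> * (of_int g * w)"
  define P :: complex where "P = of_int a + of_int g * w"
  define \<beta> :: complex where "\<beta> = of_int r + of_int s * w"
  define \<rho> :: complex where "\<rho> = of_int r' + of_int s' * w"
  have scale': "(of_int Z * of_int \<delta> * of_int m)^2 = (2 * of_int b^2 * of_int \<kappa> * of_int n :: complex)^2"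
    using arg_cong[OF scale, of "of_int :: int \<Rightarrow> complex"] by simp
  have "(of_int \<tau> :: complex)^2 = 1"
    using \<open>\<tau> = 1 \<or> \<tau> = -1\<close> by auto
  have "(4 * of_int b^4 * of_int \<kappa>^2 * of_int m^2) * (of_int (\<tau> * Z^2) * X)
      = of_int \<tau> * of_int Z^2 * of_int m^2 * (4 * of_int b^4 * of_int \<kappa>^2 * X)"
    by (simp add: algebra_simps)
  also have "\<dots> = P * of_int \<tau> * (of_int Z * of_int \<delta> * of_int m)^2 * \<beta>^4"
    unfolding X_def P_def \<beta>_def fourth_power_identity by algebra
  also have "\<dots> = (4 * of_int b^4 * of_int \<kappa>^2) * P * (of_int \<tau> * of_int n^2 * \<beta>^4)"
    unfolding scale' by algebra
  also have "\<dots> = (4 * of_int b^4 * of_int \<kappa>^2 * of_int m^2) * (P * \<rho>^4)"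
    using quartic unfolding \<rho>_def \<beta>_def by (simp add: algebra_simps)
  finally have "of_int (\<tau> * Z^2) * X = P * \<rho>^4"
    using b_pos kappa_pos \<open>m \<noteq> 0\<close> by simp
  then show ?thesis
    using norm_eq unfolding quartic_representation_def X_def P_def \<rho>_def by auto
qed

lemma multiple_representation:
  assumes "2 * b^2 * \<kappa> * k^2 = \<delta> * Z"
  shows "quartic_representation 1 Z (k*r) (k*s) \<or> quartic_representation 1 (-Z) (k*r) (k*s)"
proof (rule rescaled_representation[of 1 1 "k*r" "k*s" "k^2" Z])
  have "of_int (k*r) + of_int (k*s) * w = of_int k * (of_int r + of_int s * w)"
    by (simp add: algebra_simps)
  then show "of_int (1^2) * (of_int (k*r) + of_int (k*s) * w)^4
      = of_int (1 * (k^2)^2) * (of_int r + of_int s * w)^4"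
    by (simp add: power_mult_distrib flip: power_mult)
  show "(1 * ((k*r)^2 - c*(k*s)^2))^2 = (k^2 * (r^2 - c*s^2))^2"
    by algebra
  show "(Z * \<delta> * 1)^2 = (2 * b^2 * \<kappa> * k^2)^2"
    using assms by (simp add: algebra_simps)
qed simp_all

text \<open>\<open>w (r + s w) = c s + r w\<close>, and both coefficients are divisible by \<open>e = gcd c r\<close>.\<close>
lemma conjugate_multiple_representation:
  assumes scale: "2 * b^2 * \<kappa> * (c * k^2) = \<delta> * Z * e^2"
  shows "quartic_representation 1 Z (k * (c div e) * s) (k * (r div e))
    \<or> quartic_representation 1 (-Z) (k * (c div e) * s) (k * (r div e))"
proof -
  define c' where "c' = c div e"
  define r1 where "r1 = r div e"
  have c: "c = e * c'" and r: "r = e * r1"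
    using e_dvd_c e_dvd_r by (simp_all add: c'_def r1_def)
  have "of_int c = of_int e * (of_int c' :: complex)" and "of_int r = of_int e * (of_int r1 :: complex)"
    using c r by (metis of_int_mult)+
  then have rotate: "of_int e * (of_int (k*c'*s) + of_int (k*r1) * w) = of_int k * w * (of_int r + of_int s * w)"
    using w_square by (simp add: algebra_simps power2_eq_square)
  have "of_int ((e^2)^2) * (of_int (k*c'*s) + of_int (k*r1) * w)^4
      = (of_int e * (of_int (k*c'*s) + of_int (k*r1) * w))^4"
    by (simp add: power_mult_distrib flip: power_mult)
  also have "\<dots> = of_int k^4 * (w^2)^2 * (of_int r + of_int s * w)^4"
    unfolding rotate by algebra
  finally have "of_int ((e^2)^2) * (of_int (k*c'*s) + of_int (k*r1) * w)^4
      = of_int (1 * (c*k^2)^2) * (of_int r + of_int s * w)^4"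
    by (simp add: w_square power_mult_distrib)
  moreover have "(e^2 * ((k*c'*s)^2 - c*(k*r1)^2))^2 = (c*k^2 * (r^2 - c*s^2))^2"
    using c r by algebra
  moreover have "(Z * \<delta> * e^2)^2 = (2 * b^2 * \<kappa> * (c * k^2))^2"
    unfolding scale by (simp only: ac_simps)
  ultimately show ?thesis
    using rescaled_representation[of "e^2" 1 "k*c'*s" "k*r1" "c*k^2" Z] e_pos
    by (simp add: c'_def r1_def)
qed

text \<open>For \<open>w\<^sup>2 = -1\<close>: \<open>(1 + w) (r + s w) = (r - s) + (r + s) w\<close> and \<open>(1 + w)\<^sup>4 = -4\<close>.\<close>
lemma rotated_multiple_representation:
  assumes c: "c = -1" and "\<kappa> dvd r - s" and "\<kappa> dvd r + s"
    and scale: "2 * b^2 * (2 * k^2) = \<delta> * Z * \<kappa>"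
  shows "quartic_representation (-1) Z (k * ((r - s) div \<kappa>)) (k * ((r + s) div \<kappa>))
    \<or> quartic_representation (-1) (-Z) (k * ((r - s) div \<kappa>)) (k * ((r + s) div \<kappa>))"
proof -
  define m1 where "m1 = (r - s) div \<kappa>"
  define m2 where "m2 = (r + s) div \<kappa>"
  have m1: "r - s = \<kappa> * m1" and m2: "r + s = \<kappa> * m2"
    using assms(2,3) by (simp_all add: m1_def m2_def)
  have w: "w^2 = -1"
    using w_square c by simp
  have "of_int \<kappa> * (of_int (k*m1) + of_int (k*m2) * w) = of_int k * (of_int (r - s) + of_int (r + s) * w)"
    unfolding m1 m2 by (simp add: algebra_simps)
  also have "\<dots> = of_int k * (1 + w) * (of_int r + of_int s * w)"
    using w by (simp only: of_int_add of_int_diff) algebra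
  finally have rotate: "of_int \<kappa> * (of_int (k*m1) + of_int (k*m2) * w)
      = of_int k * (1 + w) * (of_int r + of_int s * w)" .
  have "of_int ((\<kappa>^2)^2) * (of_int (k*m1) + of_int (k*m2) * w)^4
      = (of_int \<kappa> * (of_int (k*m1) + of_int (k*m2) * w))^4"
    by (simp add: power_mult_distrib flip: power_mult)
  also have "\<dots> = of_int k^4 * ((1 + w)^2)^2 * (of_int r + of_int s * w)^4"
    unfolding rotate by algebra
  also have "(1 + w)^2 = 2 * w"
    using w by (simp add: power2_eq_square algebra_simps)
  finally have "of_int ((\<kappa>^2)^2) * (of_int (k*m1) + of_int (k*m2) * w)^4
      = of_int (-1 * (2*k^2)^2) * (of_int r + of_int s * w)^4"
    using w by (simp add: power_mult_distrib)
  moreover have "\<kappa>^2 * ((k*m1)^2 + (k*m2)^2) = k^2 * ((r - s)^2 + (r + s)^2)"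
    unfolding m1 m2 by algebra
  then have "(\<kappa>^2 * ((k*m1)^2 - c*(k*m2)^2))^2 = (2*k^2 * (r^2 - c*s^2))^2"
    using c by (simp add: algebra_simps power2_eq_square)
  moreover have "Z * \<delta> * \<kappa>^2 = \<kappa> * (\<delta> * Z * \<kappa>)"
    by (simp add: power2_eq_square ac_simps)
  then have "(Z * \<delta> * \<kappa>^2)^2 = (2 * b^2 * \<kappa> * (2*k^2))^2"
    unfolding scale [symmetric] by (simp only: ac_simps)
  ultimately show ?thesis
    using rescaled_representation[of "\<kappa>^2" "-1" "k*m1" "k*m2" "2*k^2" Z] kappa_pos
    by (simp add: m1_def m2_def)
qed

lemma representation_from_divisor:
  assumes "\<phi> = e \<or> \<phi> = c div e" and scale: "2 * b^2 * (\<phi> * \<kappa>') * k^2 = \<delta> * Z"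
  shows "\<exists>f r' s'. (f = Z \<or> f = -Z) \<and> quartic_representation 1 f r' s'"
proof (cases "\<phi> = e")
  case True
  then have "2 * b^2 * \<kappa> * k^2 = \<delta> * Z"
    using scale by (simp add: kappa_eq algebra_simps)
  then show ?thesis
    using multiple_representation by blast
next
  case False
  then have "\<delta> * Z = 2 * b^2 * ((c div e) * \<kappa>') * k^2"
    using assms(1) scale by simp
  moreover have "c = e * (c div e)"
    using e_dvd_c by simp
  ultimately have "2 * b^2 * \<kappa> * (c * k^2) = \<delta> * Z * e^2"
    using kappa_eq by algebra
  then show ?thesis
    using conjugate_multiple_representation by blast
qed

lemma gaussian_representation_from_scale:
  assumes c: "c = -1" and "j = 1 \<or> j = 2" and scale: "2 * b^2 * j * k^2 = \<delta> * Z"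
  shows "\<exists>f r' s' \<tau>. (f = Z \<or> f = -Z) \<and> (\<tau> = 1 \<or> \<tau> = -1) \<and> quartic_representation \<tau> f r' s'"
proof -
  have "e = 1"
    unfolding e_def using c by simp
  then have "\<kappa> dvd 2"
    using kappa_dvd_2e by simp
  then have \<kappa>: "\<kappa> = 1 \<or> \<kappa> = 2"
    using kappa_pos zdvd_imp_le[of \<kappa> 2] by auto
  show ?thesis
  proof (cases "\<kappa> = j")
    case True
    then show ?thesis
      using multiple_representation[of k Z] scale by (auto simp: algebra_simps)
  next
    case False
    then have "\<kappa> * j = 2"
      using \<kappa> \<open>j = 1 \<or> j = 2\<close> by auto
    then have "2 * b^2 * (2 * k^2) = \<delta> * Z * \<kappa>"
      using scale by (metis mult.assoc mult.commute)
    moreover have "\<kappa> dvd r - s \<and> \<kappa> dvd r + s"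
    proof (cases "\<kappa> = 2")
      case True
      then have "even (r^2 + c*s^2)"
        unfolding \<kappa>_def by (metis gcd_dvd1)
      then show ?thesis
        using True c by auto
    qed (use \<kappa> in auto)
    ultimately show ?thesis
      using rotated_multiple_representation[OF c] by blast
  qed
qed

end

section \<open>Bounding the multiplier\<close>

context alpha_eps_param
begin

lemma norm_identity_signed: "\<delta> * (r^2 - c*s^2) = 2 * \<kappa> * b * y \<or> \<delta> * (r^2 - c*s^2) = - (2 * \<kappa> * b * y)"
  using norm_identity by (simp add: power2_eq_iff)

lemma even_c_odd_r_two_adic:
  assumes "even c" and "odd r"
  shows "even \<delta>" and "odd \<kappa>'"
proof -
  have "odd (r^2 + c*s^2)" and "odd (r^2 - c*s^2)"
    using assms by simp_all
  then have "odd \<kappa>"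
    using dvd_trans[of 2 \<kappa> "r^2 + c*s^2"] by (auto simp: \<kappa>_def)
  then show "odd \<kappa>'"
    using kappa_eq by simp
  have "even (2 * \<kappa> * b * y)"
    by simp
  then have "even (\<delta> * (r^2 - c*s^2))"
    using norm_identity_signed by (metis even_minus)
  then show "even \<delta>"
    using \<open>odd (r^2 - c*s^2)\<close> by (metis even_mult_iff)
qed

lemma even_c_even_r_two_adic:
  assumes "even c" and "even r"
  shows "even \<delta>" and "odd \<kappa>'"
proof -
  obtain c2 where c: "c = 2 * c2"
    using assms by blast
  have "odd c2"
  proof
    assume "even c2"
    then have "2^2 dvd c"
      using c by auto
    from squarefreeD[OF squarefree_c this] show False
      by simp
  qed
  obtain r2 where r: "r = 2 * r2"
    using assms by blast
  have "odd s"
    using \<open>even r\<close> coprime_common_divisor[OF coprime_r_s, of 2] by auto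
  have "odd (2*r2^2 + c2*s^2)" and "odd (2*r2^2 - c2*s^2)"
    using \<open>odd c2\<close> \<open>odd s\<close> by simp_all
  have form: "r^2 + c*s^2 = 2 * (2*r2^2 + c2*s^2)" and norm: "r^2 - c*s^2 = 2 * (2*r2^2 - c2*s^2)"
    using r c by (simp_all add: power2_eq_square algebra_simps)
  have "even e"
    using assms by (simp add: e_def)
  show "odd \<kappa>'"
  proof
    assume "even \<kappa>'"
    then have "2 * 2 dvd \<kappa>"
      using \<open>even e\<close> kappa_eq mult_dvd_mono by metis
    then have "2 * 2 dvd 2 * (2*r2^2 + c2*s^2)"
      using dvd_trans[of _ \<kappa> "r^2 + c*s^2"] form by (simp add: \<kappa>_def)
    then show False
      using \<open>odd (2*r2^2 + c2*s^2)\<close> by (subst (asm) dvd_times_left_cancel_iff) simp_all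
  qed
  have "2 * 2 dvd 2 * \<kappa> * b * y"
    using \<open>even e\<close> kappa_eq by (auto simp: mult.assoc intro!: mult_dvd_mono)
  moreover have "\<delta> * (r^2 - c*s^2) = 2 * (\<delta> * (2*r2^2 - c2*s^2))"
    using norm by simp
  ultimately have "2 * 2 dvd 2 * (\<delta> * (2*r2^2 - c2*s^2))"
    using norm_identity_signed by (metis dvd_minus_iff)
  then show "even \<delta>"
    using \<open>odd (2*r2^2 - c2*s^2)\<close> by (subst (asm) dvd_times_left_cancel_iff) simp_all
qed

lemma odd_U_of_even_kappa':
  assumes "odd c" and "odd \<delta>" and "even \<kappa>'"
  shows "odd U"
proof -
  have "odd e"
    using \<open>odd c\<close> e_dvd_c dvd_trans by blast
  obtain k2 where k2: "\<kappa> = 2 * k2"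
    using \<open>even \<kappa>'\<close> kappa_eq by (auto elim!: evenE)
  have "odd k2"
  proof
    assume "even k2"
    then have "2 * 2 dvd 2 * e"
      using kappa_dvd_2e k2 dvd_trans by (auto elim!: evenE)
    then show False
      using \<open>odd e\<close> by (subst (asm) dvd_times_left_cancel_iff) simp_all
  qed
  have "\<kappa> dvd r^2 + c*s^2"
    by (simp add: \<kappa>_def)
  moreover have "2 dvd \<kappa>"
    using k2 by simp
  ultimately have "even (r^2 + c*s^2)"
    using dvd_trans by blast
  moreover have "\<not> (even r \<and> even s)"
    using coprime_common_divisor[OF coprime_r_s, of 2] by auto
  ultimately have "odd r" and "odd s"
    using \<open>odd c\<close> by auto
  have "2 * (k2 * U) = 2 * (- \<sigma> * \<delta> * (r * s))"
    using kappa_U[unfolded k2] by algebra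
  then have "k2 * U = - \<sigma> * \<delta> * (r * s)"
    by linarith
  moreover have "odd (- \<sigma> * \<delta> * (r * s))"
    using sigma \<open>odd \<delta>\<close> \<open>odd r\<close> \<open>odd s\<close> by auto
  ultimately have "odd (k2 * U)"
    by simp
  then show "odd U"
    by simp
qed

lemma two_adic_budget:
  assumes "\<phi> dvd c" and "\<phi> dvd 2"
  shows "multiplicity 2 (\<phi> * \<kappa>') + 1
    \<le> multiplicity 2 (if (a^2 - b^4*d) mod 4 = 1 \<and> 4 dvd d then 4 else 2 :: int) + multiplicity 2 \<delta>"
proof -
  have two: "prime (2::int)"
    by simp
  have v_even: "multiplicity 2 z \<ge> 1" if "even z" "z \<noteq> 0" for z :: int
    using that prime_multiplicity_gt_zero_iff[of "2::int" z] by simp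
  have v_odd: "multiplicity 2 z = 0" if "odd z" for z :: int
    using that by (simp add: not_dvd_imp_multiplicity_0)
  have v_dvd_2: "multiplicity 2 z \<le> 1" if "z dvd 2" for z :: int
    using dvd_imp_multiplicity_le[OF that, of 2] multiplicity_two_int[OF two] by simp
  have "\<phi> \<noteq> 0"
    using \<open>\<phi> dvd 2\<close> by auto
  then have "multiplicity 2 (\<phi> * \<kappa>') = multiplicity 2 \<phi> + multiplicity 2 \<kappa>'"
    using kappa'_pos by (simp add: prime_elem_multiplicity_mult_distrib)
  moreover have "multiplicity 2 (if (a^2 - b^4*d) mod 4 = 1 \<and> 4 dvd d then 4 else 2 :: int)
      = (if (a^2 - b^4*d) mod 4 = 1 \<and> 4 dvd d then 2 else 1)"
    using multiplicity_two_int[OF two] multiplicity_four_int[OF two] by simp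
  moreover have "multiplicity 2 \<phi> \<le> 1" "multiplicity 2 \<kappa>' \<le> 1"
    using v_dvd_2 \<open>\<phi> dvd 2\<close> kappa'_dvd_2 by auto
  moreover have "even \<delta> \<and> odd \<kappa>'" if "even c"
    using even_c_odd_r_two_adic[OF that] even_c_even_r_two_adic[OF that] by (cases "even r") simp_all
  then have "even c \<Longrightarrow> multiplicity 2 \<delta> \<ge> 1 \<and> multiplicity 2 \<kappa>' = 0"
    using v_even v_odd delta_pos by auto
  moreover have "odd c \<Longrightarrow> multiplicity 2 \<phi> = 0"
    using v_odd \<open>\<phi> dvd c\<close> dvd_trans by blast
  moreover have "odd c \<Longrightarrow> odd \<delta> \<Longrightarrow> even \<kappa>' \<Longrightarrow> (a^2 - b^4*d) mod 4 = 1 \<and> 4 dvd d"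
    using two_adic_norm_of_odd_U odd_U_of_even_kappa' by blast
  moreover have "even \<delta> \<Longrightarrow> multiplicity 2 \<delta> \<ge> 1" "odd \<kappa>' \<Longrightarrow> multiplicity 2 \<kappa>' = 0"
    using v_even v_odd delta_pos by auto
  ultimately show ?thesis
    by (cases "even c"; cases "even \<delta>"; cases "even \<kappa>'") auto
qed

lemma small_divisor_representation:
  "\<exists>f r' s' \<phi>. f \<noteq> 0 \<and> quartic_representation 1 f r' s'
     \<and> \<phi> dvd c \<and> 0 < \<phi> \<and> real_of_int \<phi> < max 2 (sqrt \<bar>real_of_int c\<bar>)
     \<and> f dvd 4 * b^2 * rad (\<phi> * G)"
proof -
  obtain \<phi> where \<phi>: "\<phi> = e \<or> \<phi> = c div e" and small: "real_of_int \<bar>\<phi>\<bar> < max 2 (sqrt \<bar>real_of_int c\<bar>)"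
    using squarefree_divisor_or_cofactor_small[OF squarefree_c e_dvd_c e_pos] e_pos by force
  have "c div e dvd c"
    using e_dvd_c by (metis dvd_div_mult_self dvd_triv_left)
  then have "\<phi> dvd c"
    using \<phi> e_dvd_c by auto
  then have "squarefree \<phi>" and "\<phi> \<noteq> 0"
    using squarefree_mono squarefree_c c_nonzero by auto
  obtain Z k where quot: "square_class_quotient (2 * b^2 * (\<phi> * \<kappa>')) \<delta> Z"
    and scale: "2 * b^2 * (\<phi> * \<kappa>') * k^2 = \<delta> * Z"
    using square_class_quotient_by_delta[of "\<phi> * \<kappa>'"] \<open>\<phi> \<noteq> 0\<close> kappa'_pos by auto
  obtain f r' s' where f: "f = Z \<or> f = -Z" and "quartic_representation 1 f r' s'"
    using representation_from_divisor[OF \<phi> scale] by blast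
  moreover have "f \<noteq> 0" and "f dvd 4 * b^2 * rad (\<bar>\<phi>\<bar> * G)"
    using f quot quotient_dvd_squarefree[OF quot \<open>squarefree \<phi>\<close> kappa'_dvd_2]
    by (auto simp: square_class_quotient_def)
  moreover have "\<bar>\<phi>\<bar> dvd c" and "0 < \<bar>\<phi>\<bar>"
    using \<open>\<phi> dvd c\<close> \<open>\<phi> \<noteq> 0\<close> by simp_all
  ultimately show ?thesis
    using small by blast
qed

lemma gaussian_representation:
  assumes c: "c = -1"
  shows "\<exists>f r' s' \<tau>. f \<noteq> 0 \<and> (\<tau> = 1 \<or> \<tau> = -1) \<and> quartic_representation \<tau> f r' s'
    \<and> f dvd b^2 * rad G"
proof -
  have "A^2 + U^2 = 4 * (b*y)^2"
    using conic_A_U c by (simp add: power_mult_distrib)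
  then have "even A" and "even U"
    using even_of_four_dvd_sum_squares[of A U] by simp_all
  then have "multiplicity 2 \<delta> \<ge> 1"
    using delta_pos prime_multiplicity_gt_zero_iff[of "2::int" \<delta>] by (simp add: \<delta>_def)
  \<comment> \<open>\<open>j\<close> makes the 2-adic valuations of \<open>2 b\<^sup>2 j\<close> and \<open>\<delta>\<close> congruent mod 2, so no factor 2 survives in \<open>f\<close>\<close>
  define j :: int where "j = (if odd (multiplicity 2 \<delta>) then 1 else 2)"
  have "j = 1 \<or> j = 2" and "j dvd 4" and "j \<noteq> 0"
    by (simp_all add: j_def)
  then obtain Z k where quot: "square_class_quotient (2 * b^2 * j) \<delta> Z"
    and scale: "2 * b^2 * j * k^2 = \<delta> * Z"
    using square_class_quotient_by_delta by blast
  have "multiplicity 2 (2 * b^2 * j) = 1 + 2 * multiplicity 2 b + (if odd (multiplicity 2 \<delta>) then 0 else 1)"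
    using b_pos multiplicity_two_int[of 2]
    by (simp add: j_def prime_elem_multiplicity_mult_distrib prime_elem_multiplicity_power_distrib)
  then have "multiplicity 2 Z \<le> multiplicity 2 (1::int) + 2 * multiplicity 2 b"
    using square_class_quotient_multiplicity[OF quot, of 2] \<open>multiplicity 2 \<delta> \<ge> 1\<close>
    by simp presburger
  then have "Z dvd 1 * b^2 * rad G"
    by (intro quotient_dvd_of_two_adic_bound[OF quot \<open>j dvd 4\<close>]) simp_all
  moreover obtain f r' s' \<tau> where f: "f = Z \<or> f = -Z" and "\<tau> = 1 \<or> \<tau> = -1"
    and "quartic_representation \<tau> f r' s'"
    using gaussian_representation_from_scale[OF c \<open>j = 1 \<or> j = 2\<close> scale] by blast
  moreover have "Z \<noteq> 0"
    using quot by (simp add: square_class_quotient_def)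
  ultimately have "f \<noteq> 0" and "f dvd b^2 * rad G"
    using f by auto
  then show ?thesis
    using \<open>\<tau> = 1 \<or> \<tau> = -1\<close> \<open>quartic_representation \<tau> f r' s'\<close> by blast
qed

lemma two_prime_core_representation:
  assumes "\<bar>c\<bar> = 2^l * p^m" and "l \<le> 1" and "m \<le> 1" and "prime p"
  shows "\<exists>f r' s'. f \<noteq> 0 \<and> quartic_representation 1 f r' s'
    \<and> f dvd (if (a^2 - b^4*d) mod 4 = 1 \<and> 4 dvd d then 4 else 2) * b^2 * rad G"
proof -
  define K :: int where "K = (if (a^2 - b^4*d) mod 4 = 1 \<and> 4 dvd d then 4 else 2)"
  define \<phi> where "\<phi> = (if e dvd 2 then e else c div e)"
  have "\<phi> = e \<or> \<phi> = c div e" and "\<phi> dvd 2"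
    using divisor_or_cofactor_dvd_2[OF assms e_dvd_c e_pos] by (auto simp: \<phi>_def)
  have "c div e dvd c"
    using e_dvd_c by (metis dvd_div_mult_self dvd_triv_left)
  then have "\<phi> dvd c"
    using e_dvd_c by (simp add: \<phi>_def)
  have "\<phi> * \<kappa>' dvd 4"
    using mult_dvd_mono[OF \<open>\<phi> dvd 2\<close> kappa'_dvd_2] by simp
  then have "\<phi> * \<kappa>' \<noteq> 0"
    by auto
  then obtain Z k where quot: "square_class_quotient (2 * b^2 * (\<phi> * \<kappa>')) \<delta> Z"
    and scale: "2 * b^2 * (\<phi> * \<kappa>') * k^2 = \<delta> * Z"
    by (rule square_class_quotient_by_delta)
  have "multiplicity 2 (2 * b^2 * (\<phi> * \<kappa>')) = 1 + 2 * multiplicity 2 b + multiplicity 2 (\<phi> * \<kappa>')"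
    using b_pos multiplicity_two_int[of 2] \<open>\<phi> * \<kappa>' dvd 4\<close> prime_imp_prime_elem[of "2::int"]
    by (subst prime_elem_multiplicity_mult_distrib; auto simp: prime_elem_multiplicity_mult_distrib
        prime_elem_multiplicity_power_distrib)
  moreover have "multiplicity 2 K \<ge> 1"
    using multiplicity_two_int[of 2] multiplicity_four_int[of 2] by (simp add: K_def)
  moreover note two_adic_budget[OF \<open>\<phi> dvd c\<close> \<open>\<phi> dvd 2\<close>, folded K_def]
  ultimately have "multiplicity 2 Z \<le> multiplicity 2 K + 2 * multiplicity 2 b"
    using square_class_quotient_multiplicity[OF quot, of 2] by (simp split: if_splits; presburger)
  then have "Z dvd K * b^2 * rad G"
    using quotient_dvd_of_two_adic_bound[OF quot \<open>\<phi> * \<kappa>' dvd 4\<close>] by (simp add: K_def)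
  moreover obtain f r' s' where f: "f = Z \<or> f = -Z" and "quartic_representation 1 f r' s'"
    using representation_from_divisor[OF \<open>\<phi> = e \<or> \<phi> = c div e\<close> scale] by blast
  moreover have "Z \<noteq> 0"
    using quot by (simp add: square_class_quotient_def)
  ultimately have "f \<noteq> 0" and "f dvd K * b^2 * rad G"
    using f by auto
  then show ?thesis
    using \<open>quartic_representation 1 f r' s'\<close> unfolding K_def by blast
qed

end

lemma alpha_eps_param_setting:
  fixes a b d t u x y :: int
  assumes "b > 0" and nonsquare: "\<not> is_square d" and "\<not> is_square (a^2 - b^4 * d)"
    and "u \<noteq> 0" and "alg_int ((of_int t + of_int u * isqrt d) / 2)" and "y > 0"
    and eq: "of_int x + of_int (y^2) * isqrt d
      = (of_int a + of_int (b^2) * isqrt d) * ((of_int t + of_int u * isqrt d) / 2)^2"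
  obtains g r s \<sigma> where "g > 0" and "a^2 - b^4 * d = core (a^2 - b^4 * d) * g^2"
    and "alpha_eps_param a b d t u x y ((t^2 - d * u^2) div 4) (core (a^2 - b^4 * d)) g
      (isqrt (core (a^2 - b^4 * d))) r s \<sigma>"
proof -
  have "4 dvd t^2 - d*u^2"
    using algebraic_int_quadratic_norm[OF nonsquare \<open>u \<noteq> 0\<close>] assms(5)
    by (simp add: alg_int_iff_algebraic_int)
  moreover have "a^2 - b^4 * d \<noteq> 0"
    using assms(3) unfolding is_square_def by auto
  then obtain g where "g > 0" and N: "a^2 - b^4 * d = core (a^2 - b^4 * d) * g^2"
    and "squarefree (core (a^2 - b^4 * d))"
    by (rule core_decompose)
  ultimately have "alpha_eps_square a b d t u x y ((t^2 - d * u^2) div 4) (core (a^2 - b^4 * d)) g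
      (isqrt (core (a^2 - b^4 * d)))"
    using \<open>g > 0\<close> N assms(1,4,6) coefficients_of_alpha_eps_square[OF nonsquare eq]
    by unfold_locales auto
  then show ?thesis
    using that[OF \<open>g > 0\<close> N] alpha_eps_square.parametrization_exists by blast
qed

theorem proposition3p1:
  fixes a b d t u x y :: int
  assumes "a \<noteq> 0" and "b > 0" and "\<not> is_square d"
    and "\<not> is_square (a^2 - b^4 * d)"
    and "t \<noteq> 0" and "u \<noteq> 0"
    and "alg_int ((of_int t + of_int u * isqrt d) / 2)"
    and "x \<noteq> 0" and "y > 0"
    and "of_int x + of_int (y^2) * isqrt d
         = (of_int a + of_int (b^2) * isqrt d) * ((of_int t + of_int u * isqrt d) / 2)^2"
  defines "N\<alpha> \<equiv> a^2 - b^4 * d"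
    and "N\<epsilon> \<equiv> (t^2 - d * u^2) div 4"
  shows
    "(\<exists>f r s f'. f \<noteq> 0
        \<and> of_int (f^2) * (of_int x + of_int N\<epsilon> * isqrt N\<alpha>)
            = (of_int a + isqrt N\<alpha>) * (of_int r + of_int s * isqrt (core N\<alpha>))^4
        \<and> f * y = b * (r^2 - core N\<alpha> * s^2)
        \<and> f' dvd core N\<alpha> \<and> 0 < f'
        \<and> real_of_int f' < max 2 (sqrt \<bar>real_of_int (core N\<alpha>)\<bar>)
        \<and> f dvd 4 * b^2 * rad (f' * gcd (u * N\<alpha> div core N\<alpha>) N\<epsilon>))
     \<and> (is_square (- N\<alpha>) \<longrightarrow>
        (\<exists>f r s. f \<noteq> 0
          \<and> f dvd b^2 * rad (gcd (u * N\<alpha>) N\<epsilon>)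
          \<and> f * y = b * (r^2 - core N\<alpha> * s^2)
          \<and> (of_int (f^2) * (of_int x + of_int N\<epsilon> * isqrt N\<alpha>)
               = (of_int a + isqrt N\<alpha>) * (of_int r + of_int s * isqrt (core N\<alpha>))^4
             \<or> - of_int (f^2) * (of_int x + of_int N\<epsilon> * isqrt N\<alpha>)
               = (of_int a + isqrt N\<alpha>) * (of_int r + of_int s * isqrt (core N\<alpha>))^4)))
     \<and> (\<forall>(l::nat) (m::nat) (p::int). l \<le> 1 \<and> m \<le> 1 \<and> l + m \<ge> 1 \<and> prime p \<and> odd p
          \<and> core \<bar>N\<alpha>\<bar> = 2^l * p^m \<longrightarrow>
        (\<exists>f r s. f \<noteq> 0
          \<and> of_int (f^2) * (of_int x + of_int N\<epsilon> * isqrt N\<alpha>)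
              = (of_int a + isqrt N\<alpha>) * (of_int r + of_int s * isqrt (core N\<alpha>))^4
          \<and> f * y = b * (r^2 - core N\<alpha> * s^2)
          \<and> (if N\<alpha> mod 4 = 1 \<and> 4 dvd d
             then f dvd 4 * b^2 * rad (gcd (u * N\<alpha> div core N\<alpha>) N\<epsilon>)
             else f dvd 2 * b^2 * rad (gcd (u * N\<alpha> div core N\<alpha>) N\<epsilon>))))"
proof -
  obtain g r s \<sigma> where "g > 0" and N\<alpha>_eq: "N\<alpha> = core N\<alpha> * g^2"
    and param: "alpha_eps_param a b d t u x y N\<epsilon> (core N\<alpha>) g (isqrt (core N\<alpha>)) r s \<sigma>"
    using alpha_eps_param_setting[OF assms(2-4,6,7,9,10)] unfolding N\<alpha>_def N\<epsilon>_def by blast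
  interpret alpha_eps_param a b d t u x y N\<epsilon> "core N\<alpha>" g "isqrt (core N\<alpha>)" r s \<sigma>
    by (rule param)
  have "N\<alpha> \<noteq> 0"
    using assms(4) unfolding N\<alpha>_def is_square_def by auto
  have isqrt_N\<alpha>: "isqrt N\<alpha> = of_int g * isqrt (core N\<alpha>)"
    using N\<alpha>_eq isqrt_mult_square[OF \<open>g > 0\<close>] by metis
  have G: "gcd (u * N\<alpha> div core N\<alpha>) N\<epsilon> = G" "core N\<alpha> = -1 \<Longrightarrow> gcd (u * N\<alpha>) N\<epsilon> = G"
    using N\<alpha>_eq c_nonzero by (metis G_def mult.left_commute nonzero_mult_div_cancel_left,
      simp add: G_def)
  show ?thesis
    unfolding isqrt_N\<alpha> G(1)
    apply (intro conjI impI allI)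
    subgoal
      using small_divisor_representation[unfolded quartic_representation_def] by auto
    subgoal premises negated_square
    proof -
      note c = core_of_negated_square[OF negated_square \<open>N\<alpha> \<noteq> 0\<close>]
      show ?thesis
        using gaussian_representation[OF c, unfolded quartic_representation_def] G(2)[OF c]
        by (elim exE conjE disjE) auto
    qed
    subgoal for l m p
      using two_prime_core_representation[of l p m, folded N\<alpha>_def, unfolded quartic_representation_def]
        core_abs[OF \<open>N\<alpha> \<noteq> 0\<close>]
      by (cases "N\<alpha> mod 4 = 1 \<and> 4 dvd d") auto
    done
qed

end
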